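(* Consider a planar vehicle satisfying the Property below, with abstract trajectory $\mathcal{T}$ and measurement points $\mathcal{P}_0,\dots,\mathcal{P}_{N_m-1}$, and let $\rho_k=\|\mathcal{P}_k-B\|$, $k=0,\dots,N_m-1$, be range measurements all collected from a single anchor $B$. A roto-translated copy $\bar{\mathcal{T}}$ of $\mathcal{T}$ is $u$-indistinguishable from $\mathcal{T}$ (i.e. produces the same measurements) if: (1) for any $N_m$, $\bar{\mathcal{T}}$ is a rotation of $\mathcal{T}$ about the anchor $B$; (2) for $N_m=1$ (or $N_m>1$ with all points $\mathcal{P}_k$ coincident), $\bar{\mathcal{T}}$ is a rotation of $\mathcal{T}$ about the unique measurement point $\mathcal{P}_0$; (3) for $N_m=2$ (or $N_m>2$ with all points $\mathcal{P}_k$ collinear), $\bar{\mathcal{T}}$ is symmetric to $\mathcal{T}$ with respect to an axis passing through the anchor $B$.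
   Context: A vehicle moves in the plane with dynamics $\dot q=f(q,u)$ and known input; its position in a vehicle frame $\mathcal{V}$ (centred at its initial position) is $P_V(t)$, computable from the inputs. Property: there is a unique triple $(\Delta x,\Delta y,\phi)$ with $P(t)=R_\phi P_V(t)+[\Delta x,\Delta y]^\top$, $R_\phi$ the rotation matrix by angle $\phi$, mapping the vehicle frame to the world frame. Measurements are taken at known instants $t_k$; the measurement points are $\mathcal{P}_k=R_\phi P_V(t_k)+[\Delta x,\Delta y]^\top$, and the abstract trajectory $\mathcal{T}$ is the union of segments joining consecutive $\mathcal{P}_k$, viewed as a rigid body. A trajectory $\bar{\mathcal{T}}$ is ($u$-)indistinguishable from $\mathcal{T}$ if it is generated by the same known input from a different final condition (equivalently, is another rigid placement of the same point sequence) and yields the identical sequence of range measurements. *)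

theory Defs
  imports Complex_Main
begin

text \<open>The plane is modelled as the complex plane; the rotation matrix R_phi acts as
  multiplication by cis phi.  PV k is the (input-determined) position of the vehicle
  in the vehicle frame at the measurement instant t_k.\<close>

definition meas_pt :: "real \<Rightarrow> complex \<Rightarrow> (nat \<Rightarrow> complex) \<Rightarrow> nat \<Rightarrow> complex" where
  "meas_pt phi D PV k = cis phi * PV k + D"

definition range_meas :: "complex \<Rightarrow> complex \<Rightarrow> real" where
  "range_meas B p = cmod (p - B)"

text \<open>The placement (phi', D') is u-indistinguishable from (phi, D): it is a different
  final condition (different rigid placement of the same point sequence) and yields
  the identical sequence of N range measurements from B.\<close>
definition u_indist ::
  "(nat \<Rightarrow> complex) \<Rightarrow> nat \<Rightarrow> complex \<Rightarrow> real \<Rightarrow> complex \<Rightarrow> real \<Rightarrow> complex \<Rightarrow> bool" where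
  "u_indist PV N B phi D phi' D' \<longleftrightarrow>
     (cis phi, D) \<noteq> (cis phi', D') \<and>
     (\<forall>k<N. range_meas B (meas_pt phi' D' PV k) = range_meas B (meas_pt phi D PV k))"

definition rot_about :: "complex \<Rightarrow> real \<Rightarrow> complex \<Rightarrow> complex" where
  "rot_about c psi z = c + cis psi * (z - c)"

definition reflect_axis :: "complex \<Rightarrow> real \<Rightarrow> complex \<Rightarrow> complex" where
  "reflect_axis c theta z = c + cis (2 * theta) * cnj (z - c)"

definition collinear_pts :: "(nat \<Rightarrow> complex) \<Rightarrow> nat \<Rightarrow> bool" where
  "collinear_pts P N \<longleftrightarrow> (\<exists>a v. v \<noteq> 0 \<and> (\<forall>k<N. \<exists>t::real. P k = a + of_real t * v))"

end

theory Submission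
  imports Defs
begin

text \<open>Rotations about B and reflections across axes
  through B are isometries fixing B, so they preserve every range; a rotation about a
  point that coincides with all measurement points leaves those points unchanged.\<close>

lemma range_meas_rot_about [simp]: "range_meas B (rot_about B psi z) = range_meas B z"
  by (simp add: rot_about_def range_meas_def norm_mult)

lemma rot_about_center [simp]: "rot_about c psi c = c"
  by (simp add: rot_about_def)

lemma range_meas_reflect_axis [simp]: "range_meas B (reflect_axis B theta z) = range_meas B z"
  by (simp add: reflect_axis_def range_meas_def norm_mult flip: complex_cnj_diff)

theorem theorem1:
  fixes PV :: "nat \<Rightarrow> complex" and N :: nat and B D D' :: complex and phi phi' :: real
  assumes N_pos: "N \<ge> 1"
    and different: "(cis phi, D) \<noteq> (cis phi', D')"
    and cases:
      "(\<exists>psi. \<forall>k<N. meas_pt phi' D' PV k = rot_about B psi (meas_pt phi D PV k))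
       \<or> ((N = 1 \<or> (\<forall>k<N. meas_pt phi D PV k = meas_pt phi D PV 0)) \<and>
          (\<exists>psi. \<forall>k<N. meas_pt phi' D' PV k
                   = rot_about (meas_pt phi D PV 0) psi (meas_pt phi D PV k)))
       \<or> ((N = 2 \<or> collinear_pts (meas_pt phi D PV) N) \<and>
          (\<exists>theta. \<forall>k<N. meas_pt phi' D' PV k = reflect_axis B theta (meas_pt phi D PV k)))"
  shows "u_indist PV N B phi D phi' D'"
  unfolding u_indist_def
proof (intro conjI allI impI different)
  fix k assume k: "k < N"
  let ?P = "meas_pt phi D PV"
  from cases show "range_meas B (meas_pt phi' D' PV k) = range_meas B (?P k)"
  proof (elim disjE)
    assume "\<exists>psi. \<forall>k<N. meas_pt phi' D' PV k = rot_about B psi (?P k)"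
    with k show ?thesis by auto
  next
    assume "(N = 1 \<or> (\<forall>k<N. ?P k = ?P 0))
      \<and> (\<exists>psi. \<forall>k<N. meas_pt phi' D' PV k = rot_about (?P 0) psi (?P k))"
    then obtain psi where single: "N = 1 \<or> (\<forall>k<N. ?P k = ?P 0)"
      and rotated: "\<forall>k<N. meas_pt phi' D' PV k = rot_about (?P 0) psi (?P k)"
      by blast
    from single k have "?P k = ?P 0" by auto
    with rotated k show ?thesis by simp
  next
    assume "(N = 2 \<or> collinear_pts ?P N)
      \<and> (\<exists>theta. \<forall>k<N. meas_pt phi' D' PV k = reflect_axis B theta (?P k))"
    with k show ?thesis by auto
  qed
qed

end
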